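(* Let $\mu,\nu$ be compactly supported Borel probability measures on $\mathbb{R}^n$ and $(q,t)\in\mathbb{R}^2$ such that $B_{\mu,\nu}$ is differentiable at $(q,t)$; set $\alpha=-\frac{\partial B_{\mu,\nu}(q,t)}{\partial q}$ and $\beta=-\frac{\partial B_{\mu,\nu}(q,t)}{\partial t}$. Then $$\mathcal H^{q,t,B_{\mu,\nu}(q,t)}_{\mu,\nu}\Big(\big(\operatorname{supp}\mu\cap\operatorname{supp}\nu\big)\setminus E_{\mu,\nu}(\alpha,\beta)\Big)=0.$$
   Context: $B(x,r)$ denotes the closed ball of center $x$ and radius $r$; conventions $0^q=\infty$ for $q\le0$, $0^q=0$ for $q>0$. Centered $\delta$-packings (resp. coverings) of $E$ are countable families of pairwise disjoint closed balls (resp. closed balls covering $E$) $B(x_i,r_i)$ with $x_i\in E$, $0<r_i\le\delta$. For $q,t,s\in\mathbb{R}$: $\overline{\mathcal P}^{q,t,s}_{\mu,\nu,\delta}(E)=\sup\sum_i\mu(B(x_i,r_i))^q\nu(B(x_i,r_i))^t(2r_i)^s$ over centered $\delta$-packings, $\overline{\mathcal P}^{q,t,s}_{\mu,\nu}=\inf_{\delta>0}\overline{\mathcal P}^{q,t,s}_{\mu,\nu,\delta}$, $\mathcal P^{q,t,s}_{\mu,\nu}(E)=\inf\{\sum_i\overline{\mathcal P}^{q,t,s}_{\mu,\nu}(E_i):E\subseteq\bigcup_iE_i\}$; $\overline{\mathcal H}^{q,t,s}_{\mu,\nu,\delta}(E)$ is the same sum with infimum over centered $\delta$-coverings, $\overline{\mathcal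 H}^{q,t,s}_{\mu,\nu}=\sup_{\delta>0}\overline{\mathcal H}^{q,t,s}_{\mu,\nu,\delta}$, $\mathcal H^{q,t,s}_{\mu,\nu}(E)=\sup_{F\subseteq E}\overline{\mathcal H}^{q,t,s}_{\mu,\nu}(F)$. $B^{q,t}_{\mu,\nu}(E)$ is the unique value in $[-\infty,\infty]$ where $s\mapsto\mathcal P^{q,t,s}_{\mu,\nu}(E)$ jumps from $\infty$ (smaller $s$) to $0$ (larger $s$), and $B_{\mu,\nu}(q,t)=B^{q,t}_{\mu,\nu}(\operatorname{supp}\mu\cap\operatorname{supp}\nu)$. $E_{\mu,\nu}(\alpha,\beta)=\{x\in\operatorname{supp}\mu\cap\operatorname{supp}\nu:\lim_{r\to0}\frac{\log\mu(B(x,r))}{\log r}=\alpha,\ \lim_{r\to0}\frac{\log\nu(B(x,r))}{\log r}=\beta\}$. *)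

theory Defs
  imports "HOL-Probability.Probability"
begin

definition msupp :: "'a::metric_space measure \<Rightarrow> 'a set" where
  "msupp \<mu> = {x. \<forall>r>0. emeasure \<mu> (ball x r) > 0}"

definition cpow :: "real \<Rightarrow> real \<Rightarrow> ennreal" where
  "cpow a q = (if a = 0 then (if q \<le> 0 then \<infinity> else 0) else ennreal (a powr q))"

definition term_mn :: "'a::metric_space measure \<Rightarrow> 'a measure \<Rightarrow> real \<Rightarrow> real \<Rightarrow> real
    \<Rightarrow> 'a \<times> real \<Rightarrow> ennreal" where
  "term_mn \<mu> \<nu> q t s p = cpow (measure \<mu> (cball (fst p) (snd p))) q
      * cpow (measure \<nu> (cball (fst p) (snd p))) t * ennreal ((2 * snd p) powr s)"

definition centered_packing :: "'a::metric_space set \<Rightarrow> real \<Rightarrow> ('a \<times> real) set \<Rightarrow> bool" where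
  "centered_packing E \<delta> P \<longleftrightarrow> countable P \<and>
     (\<forall>(x,r)\<in>P. x \<in> E \<and> 0 < r \<and> r \<le> \<delta>) \<and>
     (\<forall>p\<in>P. \<forall>p'\<in>P. p \<noteq> p' \<longrightarrow> cball (fst p) (snd p) \<inter> cball (fst p') (snd p') = {})"

definition centered_covering :: "'a::metric_space set \<Rightarrow> real \<Rightarrow> ('a \<times> real) set \<Rightarrow> bool" where
  "centered_covering E \<delta> P \<longleftrightarrow> countable P \<and>
     (\<forall>(x,r)\<in>P. x \<in> E \<and> 0 < r \<and> r \<le> \<delta>) \<and>
     E \<subseteq> (\<Union>p\<in>P. cball (fst p) (snd p))"

definition Pbar_delta :: "'a::metric_space measure \<Rightarrow> 'a measure \<Rightarrow> real \<Rightarrow> real \<Rightarrow> real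
    \<Rightarrow> real \<Rightarrow> 'a set \<Rightarrow> ennreal" where
  "Pbar_delta \<mu> \<nu> q t s \<delta> E =
     (SUP P\<in>{P. centered_packing E \<delta> P}. \<Sum>\<^sub>\<infinity>p\<in>P. term_mn \<mu> \<nu> q t s p)"

definition Pbar :: "'a::metric_space measure \<Rightarrow> 'a measure \<Rightarrow> real \<Rightarrow> real \<Rightarrow> real
    \<Rightarrow> 'a set \<Rightarrow> ennreal" where
  "Pbar \<mu> \<nu> q t s E = (INF \<delta>\<in>{0<..}. Pbar_delta \<mu> \<nu> q t s \<delta> E)"

definition Pmeas :: "'a::metric_space measure \<Rightarrow> 'a measure \<Rightarrow> real \<Rightarrow> real \<Rightarrow> real
    \<Rightarrow> 'a set \<Rightarrow> ennreal" where
  "Pmeas \<mu> \<nu> q t s E =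
     (INF A\<in>{A :: nat \<Rightarrow> 'a set. E \<subseteq> (\<Union>i. A i)}. \<Sum>i. Pbar \<mu> \<nu> q t s (A i))"

definition Hbar_delta :: "'a::metric_space measure \<Rightarrow> 'a measure \<Rightarrow> real \<Rightarrow> real \<Rightarrow> real
    \<Rightarrow> real \<Rightarrow> 'a set \<Rightarrow> ennreal" where
  "Hbar_delta \<mu> \<nu> q t s \<delta> E =
     (INF P\<in>{P. centered_covering E \<delta> P}. \<Sum>\<^sub>\<infinity>p\<in>P. term_mn \<mu> \<nu> q t s p)"

definition Hbar :: "'a::metric_space measure \<Rightarrow> 'a measure \<Rightarrow> real \<Rightarrow> real \<Rightarrow> real
    \<Rightarrow> 'a set \<Rightarrow> ennreal" where
  "Hbar \<mu> \<nu> q t s E = (SUP \<delta>\<in>{0<..}. Hbar_delta \<mu> \<nu> q t s \<delta> E)"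

definition Hmeas :: "'a::metric_space measure \<Rightarrow> 'a measure \<Rightarrow> real \<Rightarrow> real \<Rightarrow> real
    \<Rightarrow> 'a set \<Rightarrow> ennreal" where
  "Hmeas \<mu> \<nu> q t s E = (SUP F\<in>{F. F \<subseteq> E}. Hbar \<mu> \<nu> q t s F)"

definition Bdim :: "'a::metric_space measure \<Rightarrow> 'a measure \<Rightarrow> real \<Rightarrow> real \<Rightarrow> 'a set \<Rightarrow> ereal" where
  "Bdim \<mu> \<nu> q t E = Inf {ereal s | s. Pmeas \<mu> \<nu> q t s E = 0}"

definition Bmunu :: "'a::metric_space measure \<Rightarrow> 'a measure \<Rightarrow> real \<Rightarrow> real \<Rightarrow> ereal" where
  "Bmunu \<mu> \<nu> q t = Bdim \<mu> \<nu> q t (msupp \<mu> \<inter> msupp \<nu>)"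

definition Eset :: "'a::metric_space measure \<Rightarrow> 'a measure \<Rightarrow> real \<Rightarrow> real \<Rightarrow> 'a set" where
  "Eset \<mu> \<nu> \<alpha> \<beta> = {x \<in> msupp \<mu> \<inter> msupp \<nu>.
      ((\<lambda>r. ln (measure \<mu> (cball x r)) / ln r) \<longlongrightarrow> \<alpha>) (at_right 0) \<and>
      ((\<lambda>r. ln (measure \<nu> (cball x r)) / ln r) \<longlongrightarrow> \<beta>) (at_right 0)}"

end

theory Submission
  imports Defs
begin

text \<open>Write \<open>s = B(q,t)\<close>, \<open>\<alpha> = -\<partial>\<^sub>qB(q,t)\<close> and \<open>\<beta> = -\<partial>\<^sub>tB(q,t)\<close>. At a point of
  \<open>supp \<mu> \<inter> supp \<nu>\<close> outside \<open>E(\<alpha>,\<beta>)\<close> there are arbitrarily small radii \<open>r\<close> at which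
  \<open>ln \<mu>(B(x,r)) / ln r\<close> exceeds \<open>\<alpha>\<close> by more than \<open>1/(m+1)\<close>, or falls below it by that much,
  or the same happens for \<open>\<nu>\<close> and \<open>\<beta>\<close>; this splits the set into countably many pieces, indexed
  by a direction \<open>v \<in> {\<plusminus>e\<^sub>1, \<plusminus>e\<^sub>2}\<close> and a margin \<open>d\<close>. On such a piece, differentiability of \<open>B\<close>
  gives a small \<open>k > 0\<close> with \<open>B((q,t) - k v) < s + k a\<close>, where \<open>a = d - DB(q,t) v\<close>, so the
  packing measure with exponents \<open>((q,t) - k v, s + k a)\<close> vanishes on the support; and at the
  deviating radii the \<open>(q,t,s)\<close>-summand of a ball is at most \<open>2\<^sup>-\<^sup>k\<^sup>a\<close> times the shifted
  summand. By the Besicovitch covering theorem such balls cover the piece and split into boundedly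
  many packings, so the Hausdorff measure of the piece is at most a constant times that packing
  measure, hence zero.\<close>

section \<open>Besicovitch covering\<close>

lemma separated_family_card_bound:
  fixes K :: "'a::metric_space set"
  assumes "compact K" "e > 0"
  obtains N :: nat where
    "\<And>(I :: 'i set) y. (\<And>i. i \<in> I \<Longrightarrow> y i \<in> K) \<Longrightarrow>
       (\<And>i j. i \<in> I \<Longrightarrow> j \<in> I \<Longrightarrow> i \<noteq> j \<Longrightarrow> e \<le> dist (y i) (y j)) \<Longrightarrow>
       finite I \<and> card I \<le> N"
proof -
  have "e/2 > 0" using assms(2) by simp
  then obtain T where T: "finite T" "K \<subseteq> (\<Union>t\<in>T. ball t (e/2))"
    using seq_compact_imp_totally_bounded[OF compact_imp_seq_compact[OF assms(1)]] by blast
  have "finite I \<and> card I \<le> card T"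
    if y: "\<And>i. i \<in> I \<Longrightarrow> y i \<in> K"
      and sep: "\<And>i j. i \<in> I \<Longrightarrow> j \<in> I \<Longrightarrow> i \<noteq> j \<Longrightarrow> e \<le> dist (y i) (y j)"
    for I :: "'i set" and y
  proof -
    have "\<exists>t\<in>T. dist t (y i) < e/2" if "i \<in> I" for i
    proof -
      from y[OF that] T(2) obtain t where "t \<in> T" "y i \<in> ball t (e/2)" by blast
      then show ?thesis by auto
    qed
    then obtain f where f: "\<And>i. i \<in> I \<Longrightarrow> f i \<in> T \<and> dist (f i) (y i) < e/2"
      by metis
    have "inj_on f I"
    proof (rule inj_onI, rule ccontr)
      fix i j assume "i \<in> I" "j \<in> I" "f i = f j" "i \<noteq> j"
      moreover have "dist (y i) (y j) \<le> dist (f i) (y i) + dist (f j) (y j)"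
        using \<open>f i = f j\<close> dist_triangle3[of "y i" "y j" "f i"] by (simp add: dist_commute)
      ultimately show False using f[of i] f[of j] sep[of i j] by linarith
    qed
    moreover have "f ` I \<subseteq> T" using f by auto
    ultimately show ?thesis
      using T(1) card_inj_on_le[of f I T] finite_imageD[of f I] finite_subset[of "f ` I" T] by blast
  qed
  then show ?thesis using that by blast
qed

definition besicovitch_family :: "nat set \<Rightarrow> (nat \<Rightarrow> 'a::metric_space) \<Rightarrow> (nat \<Rightarrow> real) \<Rightarrow> bool" where
  "besicovitch_family J c \<rho> \<longleftrightarrow> (\<forall>j\<in>J. 0 < \<rho> j) \<and>
     (\<forall>i\<in>J. \<forall>j\<in>J. i < j \<longrightarrow> \<rho> i < dist (c i) (c j) \<and> 3 * \<rho> j < 4 * \<rho> i)"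

definition earlier_neighbours :: "nat set \<Rightarrow> (nat \<Rightarrow> 'a::metric_space) \<Rightarrow> (nat \<Rightarrow> real) \<Rightarrow> nat \<Rightarrow> nat set" where
  "earlier_neighbours J c \<rho> k = {i\<in>J. i < k \<and> cball (c i) (\<rho> i) \<inter> cball (c k) (\<rho> k) \<noteq> {}}"

lemma besicovitch_family_dist:
  assumes "besicovitch_family J c \<rho>" "i \<in> J" "j \<in> J" "i \<noteq> j"
  shows "min (\<rho> i) (\<rho> j) < dist (c i) (c j)"
proof (cases "i < j")
  case True
  then show ?thesis using assms unfolding besicovitch_family_def by (simp add: min_less_iff_disj)
next
  case False
  then have "j < i" using assms(4) by simp
  then have "\<rho> j < dist (c j) (c i)"
    using assms unfolding besicovitch_family_def by blast
  then show ?thesis by (simp add: min_less_iff_disj dist_commute)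
qed

lemma earlier_neighboursD:
  assumes "besicovitch_family J c \<rho>" "k \<in> J" "i \<in> earlier_neighbours J c \<rho> k"
  shows "i \<in> J" "i < k" "0 < \<rho> k" "\<rho> i < dist (c i) (c k)" "dist (c i) (c k) \<le> \<rho> i + \<rho> k"
    "3 * \<rho> k < 4 * \<rho> i"
proof -
  show i: "i \<in> J" "i < k" using assms(3) unfolding earlier_neighbours_def by auto
  show "0 < \<rho> k" "\<rho> i < dist (c i) (c k)" "3 * \<rho> k < 4 * \<rho> i"
    using assms(1,2) i unfolding besicovitch_family_def by auto
  obtain z where "dist (c i) z \<le> \<rho> i" "dist (c k) z \<le> \<rho> k"
    using assms(3) unfolding earlier_neighbours_def by auto
  then show "dist (c i) (c k) \<le> \<rho> i + \<rho> k"
    using dist_triangle3[of "c i" "c k" z] by (simp add: dist_commute)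
qed

lemma besicovitch_small_neighbours_bound:
  obtains N :: nat where
    "\<And>J (c :: nat \<Rightarrow> 'a::euclidean_space) \<rho> k. besicovitch_family J c \<rho> \<Longrightarrow> k \<in> J \<Longrightarrow>
       finite {i\<in>earlier_neighbours J c \<rho> k. \<rho> i \<le> 3 * \<rho> k} \<and>
       card {i\<in>earlier_neighbours J c \<rho> k. \<rho> i \<le> 3 * \<rho> k} \<le> N"
proof -
  have "compact (cball (0::'a) 4)" "(0::real) < 3/4" by simp_all
  then obtain N where N: "\<And>(I::nat set) y. (\<And>i. i \<in> I \<Longrightarrow> y i \<in> cball (0::'a) 4) \<Longrightarrow>
       (\<And>i j. i \<in> I \<Longrightarrow> j \<in> I \<Longrightarrow> i \<noteq> j \<Longrightarrow> 3/4 \<le> dist (y i) (y j)) \<Longrightarrow>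
       finite I \<and> card I \<le> N"
    by (rule separated_family_card_bound) blast
  have "finite I \<and> card I \<le> N"
    if fam: "besicovitch_family J c \<rho>" and k: "k \<in> J"
      and I: "I = {i\<in>earlier_neighbours J c \<rho> k. \<rho> i \<le> 3 * \<rho> k}"
    for J and c :: "nat \<Rightarrow> 'a" and \<rho> k I
  proof -
    note props = earlier_neighboursD[OF fam k]
    have rk: "0 < \<rho> k" using fam k unfolding besicovitch_family_def by blast
    define y where "y i = (1 / \<rho> k) *\<^sub>R (c i - c k)" for i
    have dist_y: "dist (y i) (y j) = dist (c i) (c j) / \<rho> k" for i j
      using rk by (simp add: y_def dist_norm flip: scaleR_diff_right)
    show ?thesis
    proof (rule N)
      fix i assume "i \<in> I"
      then have "dist (c i) (c k) \<le> 4 * \<rho> k" using props(5) I by fastforce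
      then show "y i \<in> cball 0 4"
        using dist_y[of i k] rk by (simp add: y_def divide_le_eq dist_commute)
    next
      fix i j assume ij: "i \<in> I" "j \<in> I" "i \<noteq> j"
      then have "3/4 * \<rho> k < min (\<rho> i) (\<rho> j)"
        using props(6)[of i] props(6)[of j] ij I by auto
      also have "\<dots> < dist (c i) (c j)"
        using besicovitch_family_dist[OF fam] props(1) ij I by auto
      finally show "3/4 \<le> dist (y i) (y j)"
        using rk by (simp add: dist_y le_divide_eq)
    qed
  qed
  then show ?thesis using that by blast
qed

lemma besicovitch_angle_real:
  fixes \<rho> ra rb da db p :: real
  assumes "0 < \<rho>" "3 * \<rho> < ra" "3 * \<rho> < rb" "3 * rb < 4 * ra"
    and "ra < da" "da \<le> ra + \<rho>" "rb < db" "db \<le> rb + \<rho>"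
    and "ra\<^sup>2 < da\<^sup>2 + db\<^sup>2 - 2 * p"
  shows "p < 9/10 * (da * db)"
proof (rule ccontr)
  assume "\<not> ?thesis"
  then have p: "9/10 * (da * db) \<le> p" by simp
  show False
  proof (cases "db \<le> da")
    case True
    define R where "R = ra + \<rho>"
    have "0 \<le> (R - da) * (R + da - 18/10 * db)"
      using assms True unfolding R_def by (intro mult_nonneg_nonneg) auto
    moreover have "db * db \<le> db * R" "\<rho> * R \<le> (1/3) * (db * R)" "0 \<le> db * R"
      using assms True unfolding R_def by (auto intro: mult_left_mono mult_right_mono)
    moreover have "R\<^sup>2 - 18/10 * (db * R) + db\<^sup>2 - (da\<^sup>2 + db\<^sup>2 - 18/10 * (da * db))
        = (R - da) * (R + da - 18/10 * db)"
      "ra\<^sup>2 - (R\<^sup>2 - 18/10 * (db * R) + db\<^sup>2)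
        = 18/10 * (db * R) - db * db - 2 * (\<rho> * R) + \<rho> * \<rho>"
      "db\<^sup>2 = db * db"
      unfolding R_def by algebra+
    moreover have "0 < \<rho> * \<rho>" using assms by simp
    ultimately show False using assms p by linarith
  next
    case False
    have "(db - da) * (db - da) \<le> (2/3 * ra) * (2/3 * ra)"
      using False assms by (intro mult_mono) auto
    moreover have "da * db \<le> (4/3 * ra) * (5/3 * ra)"
      using assms by (intro mult_mono) auto
    moreover have "da\<^sup>2 + db\<^sup>2 - 18/10 * (da * db) = (db - da) * (db - da) + 2/10 * (da * db)"
      "(2/3 * ra) * (2/3 * ra) = 4/9 * ra\<^sup>2" "(4/3 * ra) * (5/3 * ra) = 20/9 * ra\<^sup>2"
      by algebra+
    moreover have "0 < ra\<^sup>2" using assms by simp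
    ultimately show False using assms p by linarith
  qed
qed

(* Seen from the centre of a ball, the centres a and b of two large earlier neighbours point in
   well separated directions: a small angle between them would put b into the ball around a. *)
lemma besicovitch_angle:
  fixes a b :: "'a::real_inner"
  assumes "0 < \<rho>" "3 * \<rho> < ra" "3 * \<rho> < rb" "3 * rb < 4 * ra"
    and "ra < norm a" "norm a \<le> ra + \<rho>" "rb < norm b" "norm b \<le> rb + \<rho>"
    and "ra < norm (a - b)"
  shows "a \<bullet> b < 9/10 * (norm a * norm b)"
proof (rule besicovitch_angle_real[OF assms(1-8)])
  have "ra\<^sup>2 < (norm (a - b))\<^sup>2"
    using assms by (intro power_strict_mono) auto
  then show "ra\<^sup>2 < (norm a)\<^sup>2 + (norm b)\<^sup>2 - 2 * (a \<bullet> b)"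
    using dot_norm_neg[of a b] by simp
qed

lemma dist_sgn_ge_if_inner_less:
  fixes a b :: "'a::real_inner"
  assumes "a \<noteq> 0" "b \<noteq> 0" "a \<bullet> b < 9/10 * (norm a * norm b)"
  shows "2/5 \<le> dist (sgn a) (sgn b)"
proof -
  have "sgn a \<bullet> sgn b = (a \<bullet> b) / (norm a * norm b)"
    by (simp add: sgn_div_norm divide_inverse_commute)
  then have "sgn a \<bullet> sgn b < 9/10"
    using assms by (simp add: divide_less_eq)
  then have "(2/5)\<^sup>2 \<le> (dist (sgn a) (sgn b))\<^sup>2"
    using dot_norm_neg[of "sgn a" "sgn b"] assms by (simp add: norm_sgn dist_norm power2_eq_square)
  then show ?thesis
    by (rule power2_le_imp_le) simp
qed

lemma besicovitch_large_neighbours_bound: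
  obtains N :: nat where
    "\<And>J (c :: nat \<Rightarrow> 'a::euclidean_space) \<rho> k. besicovitch_family J c \<rho> \<Longrightarrow> k \<in> J \<Longrightarrow>
       finite {i\<in>earlier_neighbours J c \<rho> k. 3 * \<rho> k < \<rho> i} \<and>
       card {i\<in>earlier_neighbours J c \<rho> k. 3 * \<rho> k < \<rho> i} \<le> N"
proof -
  have "compact (cball (0::'a) 1)" "(0::real) < 2/5" by simp_all
  then obtain N where N: "\<And>(I::nat set) y. (\<And>i. i \<in> I \<Longrightarrow> y i \<in> cball (0::'a) 1) \<Longrightarrow>
       (\<And>i j. i \<in> I \<Longrightarrow> j \<in> I \<Longrightarrow> i \<noteq> j \<Longrightarrow> 2/5 \<le> dist (y i) (y j)) \<Longrightarrow>
       finite I \<and> card I \<le> N"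
    by (rule separated_family_card_bound) blast
  have "finite I \<and> card I \<le> N"
    if fam: "besicovitch_family J c \<rho>" and k: "k \<in> J"
      and I: "I = {i\<in>earlier_neighbours J c \<rho> k. 3 * \<rho> k < \<rho> i}"
    for J and c :: "nat \<Rightarrow> 'a" and \<rho> k I
  proof -
    note props = earlier_neighboursD[OF fam k]
    have rk: "0 < \<rho> k" using fam k unfolding besicovitch_family_def by blast
    have nz: "c i - c k \<noteq> 0" if "i \<in> I" for i
      using props(4)[of i] rk that I by auto
    have sep: "2/5 \<le> dist (sgn (c i - c k)) (sgn (c j - c k))" if "i \<in> I" "j \<in> I" "i < j" for i j
    proof (rule dist_sgn_ge_if_inner_less[OF nz[OF that(1)] nz[OF that(2)]])
      have "\<rho> i < dist (c i) (c j)" "3 * \<rho> j < 4 * \<rho> i"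
        using fam that props(1) I unfolding besicovitch_family_def by auto
      then show "(c i - c k) \<bullet> (c j - c k) < 9/10 * (norm (c i - c k) * norm (c j - c k))"
        using props(4,5)[of i] props(4,5)[of j] that I rk
        by (intro besicovitch_angle[where \<rho> = "\<rho> k" and ra = "\<rho> i" and rb = "\<rho> j"])
          (auto simp: dist_norm)
    qed
    show ?thesis
    proof (rule N)
      show "sgn (c i - c k) \<in> cball 0 1" for i
        by (simp add: norm_sgn)
      show "2/5 \<le> dist (sgn (c i - c k)) (sgn (c j - c k))" if "i \<in> I" "j \<in> I" "i \<noteq> j" for i j
        using sep[of i j] sep[of j i] that by (metis dist_commute linorder_neq_iff)
    qed
  qed
  then show ?thesis using that by blast
qed

lemma besicovitch_neighbours_bound:
  obtains M :: nat where
    "\<And>J (c :: nat \<Rightarrow> 'a::euclidean_space) \<rho> k. besicovitch_family J c \<rho> \<Longrightarrow> k \<in> J \<Longrightarrow>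
       finite (earlier_neighbours J c \<rho> k) \<and> card (earlier_neighbours J c \<rho> k) \<le> M"
proof -
  obtain N1 where N1: "\<And>J (c :: nat \<Rightarrow> 'a) \<rho> k. besicovitch_family J c \<rho> \<Longrightarrow> k \<in> J \<Longrightarrow>
       finite {i\<in>earlier_neighbours J c \<rho> k. \<rho> i \<le> 3 * \<rho> k} \<and>
       card {i\<in>earlier_neighbours J c \<rho> k. \<rho> i \<le> 3 * \<rho> k} \<le> N1"
    by (rule besicovitch_small_neighbours_bound) blast
  obtain N2 where N2: "\<And>J (c :: nat \<Rightarrow> 'a) \<rho> k. besicovitch_family J c \<rho> \<Longrightarrow> k \<in> J \<Longrightarrow>
       finite {i\<in>earlier_neighbours J c \<rho> k. 3 * \<rho> k < \<rho> i} \<and>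
       card {i\<in>earlier_neighbours J c \<rho> k. 3 * \<rho> k < \<rho> i} \<le> N2"
    by (rule besicovitch_large_neighbours_bound) blast
  have "finite (earlier_neighbours J c \<rho> k) \<and> card (earlier_neighbours J c \<rho> k) \<le> N1 + N2"
    if "besicovitch_family J c \<rho>" "k \<in> J" for J and c :: "nat \<Rightarrow> 'a" and \<rho> k
  proof -
    let ?S = "{i\<in>earlier_neighbours J c \<rho> k. \<rho> i \<le> 3 * \<rho> k}"
    let ?L = "{i\<in>earlier_neighbours J c \<rho> k. 3 * \<rho> k < \<rho> i}"
    have "finite (?S \<union> ?L) \<and> card (?S \<union> ?L) \<le> N1 + N2"
      using N1[OF that] N2[OF that] card_Un_le[of ?S ?L] by auto
    moreover have "?S \<union> ?L = earlier_neighbours J c \<rho> k" by auto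
    ultimately show ?thesis by simp
  qed
  then show ?thesis using that by blast
qed

definition uncovered :: "'a::metric_space set \<Rightarrow> ('a \<Rightarrow> real) \<Rightarrow> 'a set \<Rightarrow> 'a set" where
  "uncovered A r C = A - (\<Union>x\<in>C. cball x (r x))"

definition greedy_centre :: "('a \<Rightarrow> real) \<Rightarrow> 'a set \<Rightarrow> 'a" where
  "greedy_centre r X = (SOME x. x \<in> X \<and> 3 * (SUP y\<in>X. r y) < 4 * r x)"

primrec greedy_centres :: "'a::metric_space set \<Rightarrow> ('a \<Rightarrow> real) \<Rightarrow> nat \<Rightarrow> 'a set" where
  "greedy_centres A r 0 = {}"
| "greedy_centres A r (Suc n) =
     (if uncovered A r (greedy_centres A r n) = {} then greedy_centres A r n
      else insert (greedy_centre r (uncovered A r (greedy_centres A r n))) (greedy_centres A r n))"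

lemma greedy_centre:
  assumes "X \<noteq> {}" "\<And>x. x \<in> X \<Longrightarrow> 0 < r x \<and> r x \<le> R"
  shows "greedy_centre r X \<in> X" "3 * (SUP y\<in>X. r y) < 4 * r (greedy_centre r X)"
proof -
  have bdd: "bdd_above (r ` X)" using assms(2) by (intro bdd_aboveI[of _ R]) auto
  obtain x where "x \<in> X" using assms(1) by blast
  then have "0 < (SUP y\<in>X. r y)"
    using assms(2) cSUP_upper[OF _ bdd] by (fastforce intro: less_le_trans)
  then have "3/4 * (SUP y\<in>X. r y) < (SUP y\<in>X. r y)" by simp
  then obtain a where "a \<in> X" "3/4 * (SUP y\<in>X. r y) < r a"
    using less_cSUP_iff[OF assms(1) bdd] by blast
  then have "\<exists>a. a \<in> X \<and> 3 * (SUP y\<in>X. r y) < 4 * r a" by auto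
  then show "greedy_centre r X \<in> X" "3 * (SUP y\<in>X. r y) < 4 * r (greedy_centre r X)"
    unfolding greedy_centre_def by (metis (mono_tags, lifting) someI_ex)+
qed

lemma besicovitch_family_finite_if_radii_bounded_below:
  fixes c :: "nat \<Rightarrow> 'a::heine_borel"
  assumes "besicovitch_family J c \<rho>" "bounded (c ` J)" "0 < e" "\<And>j. j \<in> J \<Longrightarrow> e \<le> \<rho> j"
  shows "finite J"
proof (rule separated_family_card_bound[of "closure (c ` J)" e])
  show "compact (closure (c ` J))" using assms(2) by (simp add: compact_closure)
  show "0 < e" by fact
  fix N :: nat
  assume N: "\<And>(I::nat set) y. (\<And>i. i \<in> I \<Longrightarrow> y i \<in> closure (c ` J)) \<Longrightarrow>
      (\<And>i j. i \<in> I \<Longrightarrow> j \<in> I \<Longrightarrow> i \<noteq> j \<Longrightarrow> e \<le> dist (y i) (y j)) \<Longrightarrow>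
      finite I \<and> card I \<le> N"
  have "finite J \<and> card J \<le> N"
  proof (rule N)
    show "c i \<in> closure (c ` J)" if "i \<in> J" for i
      using that by (intro closure_subset[THEN subsetD] imageI)
    show "e \<le> dist (c i) (c j)" if "i \<in> J" "j \<in> J" "i \<noteq> j" for i j
      using besicovitch_family_dist[OF assms(1) that] assms(4)[of i] assms(4)[of j] that
      by (auto simp: min_less_iff_disj)
  qed
  then show "finite J" by blast
qed

lemma besicovitch_selection:
  fixes A :: "'a::heine_borel set"
  assumes "bounded A" and r: "\<And>x. x \<in> A \<Longrightarrow> 0 < r x \<and> r x \<le> R"
  obtains J c where "besicovitch_family J c (r \<circ> c)" "c ` J \<subseteq> A"
    "A \<subseteq> (\<Union>j\<in>J. cball (c j) (r (c j)))"
proof -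
  define U where "U n = uncovered A r (greedy_centres A r n)" for n
  define J where "J = {n. U n \<noteq> {}}"
  define c where "c n = greedy_centre r (U n)" for n
  have step: "greedy_centres A r (Suc n) =
      (if n \<in> J then insert (c n) (greedy_centres A r n) else greedy_centres A r n)" for n
    by (simp add: J_def U_def c_def)
  have centres: "greedy_centres A r n = c ` {j\<in>J. j < n}" for n
  proof (induction n)
    case (Suc n)
    show ?case unfolding step Suc.IH by (auto simp: less_Suc_eq)
  qed simp
  have U_sub: "U n \<subseteq> A" for n
    unfolding U_def uncovered_def by blast
  have U_antimono: "U j \<subseteq> U i" if "i \<le> j" for i j
    using that unfolding U_def uncovered_def centres by auto
  have c: "c j \<in> U j" "3 * (SUP y\<in>U j. r y) < 4 * r (c j)" if "j \<in> J" for j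
    using greedy_centre[of "U j" r R] that r U_sub unfolding c_def J_def by auto
  have SUP_U: "r y \<le> (SUP y\<in>U j. r y)" if "y \<in> U j" for y j
    using that r U_sub by (intro cSUP_upper bdd_aboveI[of _ R]) auto
  have cA: "c ` J \<subseteq> A" using c U_sub by blast
  have fam: "besicovitch_family J c (r \<circ> c)"
    unfolding besicovitch_family_def
  proof (intro conjI ballI impI)
    show "0 < (r \<circ> c) j" if "j \<in> J" for j using cA r that by auto
    fix i j assume ij: "i \<in> J" "j \<in> J" "i < j"
    then have "c j \<notin> cball (c i) (r (c i))"
      using c(1)[of j] unfolding U_def uncovered_def centres by blast
    then show "(r \<circ> c) i < dist (c i) (c j)" by simp
    have "c j \<in> U i" using c(1)[of j] U_antimono[of i j] ij by auto
    then show "3 * (r \<circ> c) j < 4 * (r \<circ> c) i"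
      using SUP_U[of "c j" i] c(2)[of i] ij by simp
  qed
  (* An uncovered point keeps every selected radius above 3/4 of its own radius, so the
     selected centres would form an infinite separated family in the bounded set A. *)
  have "a \<in> (\<Union>j\<in>J. cball (c j) (r (c j)))" if a: "a \<in> A" for a
  proof (rule ccontr)
    assume "a \<notin> (\<Union>j\<in>J. cball (c j) (r (c j)))"
    then have aU: "a \<in> U n" for n
      using a unfolding U_def uncovered_def centres by auto
    then have J: "J = UNIV" unfolding J_def by auto
    have "3/4 * r a \<le> (r \<circ> c) n" for n
      using SUP_U[OF aU, of n] c(2)[of n] J by simp
    then have "finite J"
      using fam cA bounded_subset[OF \<open>bounded A\<close> cA] r[OF a]
      by (intro besicovitch_family_finite_if_radii_bounded_below[of J c "r \<circ> c" "3/4 * r a"]) auto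
    then show False using J by simp
  qed
  then show ?thesis using that fam cA by blast
qed

lemma greedy_colouring:
  fixes adj :: "nat \<Rightarrow> nat \<Rightarrow> bool"
  assumes "\<And>k. k \<in> J \<Longrightarrow> finite {i\<in>J. i < k \<and> adj i k} \<and> card {i\<in>J. i < k \<and> adj i k} \<le> M"
  obtains col where "\<And>j. j \<in> J \<Longrightarrow> col j \<le> M"
    "\<And>i j. i \<in> J \<Longrightarrow> j \<in> J \<Longrightarrow> i < j \<Longrightarrow> adj i j \<Longrightarrow> col i \<noteq> col j"
proof -
  let ?earlier = "\<lambda>j. {i\<in>J. i < j \<and> adj i j}"
  define col :: "nat \<Rightarrow> nat" where "col = wfrec less_than (\<lambda>col j. LEAST m. m \<notin> col ` ?earlier j)"
  have col: "col j = (LEAST m. m \<notin> col ` ?earlier j)" for j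
  proof -
    have "col j = (LEAST m. m \<notin> cut col less_than j ` ?earlier j)"
      by (rule def_wfrec[OF col_def[THEN eq_reflection] wf_less_than])
    also have "cut col less_than j ` ?earlier j = col ` ?earlier j"
      by (intro image_cong refl) (simp add: cut_apply)
    finally show ?thesis .
  qed
  have free: "\<exists>m\<le>M. m \<notin> col ` ?earlier j" if "j \<in> J" for j
  proof -
    have "card (col ` ?earlier j) \<le> M"
      using assms[OF that] card_image_le le_trans by blast
    then have "\<not> {0..M} \<subseteq> col ` ?earlier j"
      using assms[OF that] card_mono[of "col ` ?earlier j" "{0..M}"] by fastforce
    then show ?thesis by auto
  qed
  show ?thesis
  proof
    show "col j \<le> M" if "j \<in> J" for j
      using free[OF that] col[of j] by (metis (no_types, lifting) Least_le order_trans)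
    show "col i \<noteq> col j" if "i \<in> J" "j \<in> J" "i < j" "adj i j" for i j
    proof -
      have "col j \<notin> col ` ?earlier j"
        unfolding col[of j] using free[OF that(2)] by (metis (no_types, lifting) LeastI)
      then show ?thesis using that by (metis (mono_tags, lifting) image_eqI mem_Collect_eq)
    qed
  qed
qed

lemma cball_colouring:
  fixes c :: "nat \<Rightarrow> 'a::metric_space"
  assumes "\<And>k. k \<in> J \<Longrightarrow>
    finite (earlier_neighbours J c \<rho> k) \<and> card (earlier_neighbours J c \<rho> k) \<le> M"
  obtains col :: "nat \<Rightarrow> nat" where "\<And>j. j \<in> J \<Longrightarrow> col j \<le> M"
    "\<And>i j. i \<in> J \<Longrightarrow> j \<in> J \<Longrightarrow> i \<noteq> j \<Longrightarrow> col i = col j \<Longrightarrow>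
       cball (c i) (\<rho> i) \<inter> cball (c j) (\<rho> j) = {}"
proof -
  let ?adj = "\<lambda>i j. cball (c i) (\<rho> i) \<inter> cball (c j) (\<rho> j) \<noteq> {}"
  obtain col :: "nat \<Rightarrow> nat" where col_le: "\<And>j. j \<in> J \<Longrightarrow> col j \<le> M"
    and col_ne: "\<And>i j. i \<in> J \<Longrightarrow> j \<in> J \<Longrightarrow> i < j \<Longrightarrow> ?adj i j \<Longrightarrow> col i \<noteq> col j"
    using greedy_colouring[of J ?adj M, OF assms[unfolded earlier_neighbours_def]] by blast
  show thesis
  proof (rule that[OF col_le])
    show "cball (c i) (\<rho> i) \<inter> cball (c j) (\<rho> j) = {}"
      if "i \<in> J" "j \<in> J" "i \<noteq> j" "col i = col j" for i j
      using col_ne[of i j] col_ne[of j i] that by (metis Int_commute linorder_neq_iff)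
  qed
qed

lemma besicovitch_covering:
  obtains N :: nat where
    "\<And>(G :: 'a::euclidean_space set) \<delta> r. bounded G \<Longrightarrow> (\<And>x. x \<in> G \<Longrightarrow> 0 < r x \<and> r x \<le> \<delta>) \<Longrightarrow>
       \<exists>P. (\<forall>m. centered_packing G \<delta> (P m) \<and> P m \<subseteq> (\<lambda>x. (x, r x)) ` G) \<and>
           centered_covering G \<delta> (\<Union>m<N. P m)"
proof -
  obtain M where M: "\<And>J (c :: nat \<Rightarrow> 'a) \<rho> k. besicovitch_family J c \<rho> \<Longrightarrow> k \<in> J \<Longrightarrow>
       finite (earlier_neighbours J c \<rho> k) \<and> card (earlier_neighbours J c \<rho> k) \<le> M"
    by (rule besicovitch_neighbours_bound) blast
  have "\<exists>P. (\<forall>m. centered_packing G \<delta> (P m) \<and> P m \<subseteq> (\<lambda>x. (x, r x)) ` G) \<and>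
           centered_covering G \<delta> (\<Union>m<Suc M. P m)"
    if G: "bounded G" and r_pos: "\<And>x. x \<in> G \<Longrightarrow> 0 < r x \<and> r x \<le> \<delta>"
    for G :: "'a set" and \<delta> r
  proof -
    obtain J c where fam: "besicovitch_family J c (r \<circ> c)" and cG: "c ` J \<subseteq> G"
      and cover: "G \<subseteq> (\<Union>j\<in>J. cball (c j) (r (c j)))"
      using besicovitch_selection[of G r \<delta>] G r_pos by blast
    obtain col :: "nat \<Rightarrow> nat" where col_le: "\<And>j. j \<in> J \<Longrightarrow> col j \<le> M"
      and disjoint: "\<And>i j. i \<in> J \<Longrightarrow> j \<in> J \<Longrightarrow> i \<noteq> j \<Longrightarrow> col i = col j \<Longrightarrow>
        cball (c i) (r (c i)) \<inter> cball (c j) (r (c j)) = {}"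
      using cball_colouring[of J c "r \<circ> c" M] M[OF fam] by auto
    define P where "P m = (\<lambda>j. (c j, r (c j))) ` {j\<in>J. col j = m}" for m
    have "centered_packing G \<delta> (P m)" for m
      unfolding centered_packing_def P_def using cG r_pos disjoint by fastforce
    moreover have "P m \<subseteq> (\<lambda>x. (x, r x)) ` G" for m
      using cG unfolding P_def by auto
    moreover have "(\<Union>m<Suc M. P m) = (\<lambda>j. (c j, r (c j))) ` J"
    proof
      show "(\<lambda>j. (c j, r (c j))) ` J \<subseteq> (\<Union>m<Suc M. P m)"
      proof
        fix p assume "p \<in> (\<lambda>j. (c j, r (c j))) ` J"
        then obtain j where "j \<in> J" "p = (c j, r (c j))" by blast
        then have "p \<in> P (col j)" "col j < Suc M" unfolding P_def using col_le[of j] by auto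
        then show "p \<in> (\<Union>m<Suc M. P m)" by blast
      qed
    qed (auto simp: P_def)
    then have "centered_covering G \<delta> (\<Union>m<Suc M. P m)"
      unfolding centered_covering_def using cG r_pos cover by auto
    ultimately show ?thesis by blast
  qed
  then show ?thesis by (rule that)
qed

section \<open>The packing and Hausdorff measures\<close>

lemma ennreal_infsum_Un_le:
  fixes f :: "'a \<Rightarrow> ennreal"
  shows "infsum f (A \<union> B) \<le> infsum f A + infsum f B"
proof -
  have "infsum f (A \<union> B) = infsum f (A \<union> (B - A))" by simp
  also have "\<dots> = infsum f A + infsum f (B - A)"
    by (intro infsum_Un_disjoint nonneg_summable_on_complete) auto
  also have "infsum f (B - A) \<le> infsum f B"
    by (intro infsum_mono_neutral nonneg_summable_on_complete) auto
  finally show ?thesis by (simp add: add_left_mono)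
qed

lemma ennreal_infsum_UN_lessThan_le:
  fixes f :: "'a \<Rightarrow> ennreal" and N :: nat
  shows "infsum f (\<Union>m<N. P m) \<le> (\<Sum>m<N. infsum f (P m))"
proof (induction N)
  case 0
  then show ?case by simp
next
  case (Suc N)
  have "infsum f (\<Union>m<Suc N. P m) \<le> infsum f (\<Union>m<N. P m) + infsum f (P N)"
    using ennreal_infsum_Un_le[of f "\<Union>m<N. P m" "P N"] by (simp add: lessThan_Suc Un_commute)
  also have "\<dots> \<le> (\<Sum>m<Suc N. infsum f (P m))"
    using Suc.IH by (simp add: add_right_mono)
  finally show ?case .
qed

lemma ennreal_infsum_UN_le:
  fixes f :: "'a \<Rightarrow> ennreal"
  shows "infsum f (\<Union>m. P m) \<le> (\<Sum>m. infsum f (P m))"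
proof (rule infsum_le_finite_sums)
  fix F assume F: "finite F" "F \<subseteq> (\<Union>m. P m)"
  then obtain g where g: "\<And>x. x \<in> F \<Longrightarrow> x \<in> P (g x)" by (metis UN_E subsetD)
  have "F \<subseteq> (\<Union>m<Suc (Max (g ` F)). P m)"
    using g F(1) by (fastforce simp: less_Suc_eq_le)
  then have "sum f F \<le> infsum f (\<Union>m<Suc (Max (g ` F)). P m)"
    using F(1) by (auto intro!: infsum_mono_neutral nonneg_summable_on_complete simp flip: infsum_finite)
  also have "\<dots> \<le> (\<Sum>m<Suc (Max (g ` F)). infsum f (P m))"
    by (rule ennreal_infsum_UN_lessThan_le)
  also have "\<dots> \<le> (\<Sum>m. infsum f (P m))"
    by (intro sum_le_suminf) auto
  finally show "sum f F \<le> (\<Sum>m. infsum f (P m))" .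
qed (rule nonneg_summable_on_complete, simp)

lemma ennreal_infsum_cmult_le:
  fixes f :: "'a \<Rightarrow> ennreal"
  shows "infsum (\<lambda>x. C * f x) A \<le> C * infsum f A"
proof (rule infsum_le_finite_sums)
  fix F assume "finite F" "F \<subseteq> A"
  then have "sum f F \<le> infsum f A"
    by (auto intro!: infsum_mono_neutral nonneg_summable_on_complete simp flip: infsum_finite)
  then show "(\<Sum>x\<in>F. C * f x) \<le> C * infsum f A"
    by (simp add: mult_left_mono flip: sum_distrib_left)
qed (rule nonneg_summable_on_complete, simp)

lemma ennreal_mult_INF:
  fixes K :: ennreal
  assumes "K < top" "I \<noteq> {}"
  shows "K * (INF i\<in>I. f i) = (INF i\<in>I. K * f i)"
proof -
  have "mono (\<lambda>x::ennreal. K * x)" by (intro monoI mult_left_mono) auto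
  moreover have "continuous (at_right (Inf (f ` I))) (\<lambda>x::ennreal. K * x)"
    unfolding continuous_within
    by (rule ennreal_tendsto_cmult[OF assms(1)]) (rule tendsto_ident_at)
  ultimately have "K * Inf (f ` I) = (INF y\<in>f ` I. K * y)"
    by (rule continuous_at_Inf_mono) (use assms in auto)
  then show ?thesis by (simp add: image_image)
qed

lemma Pbar_delta_mono:
  "\<delta> \<le> \<delta>' \<Longrightarrow> E \<subseteq> F \<Longrightarrow> Pbar_delta \<mu> \<nu> q t s \<delta> E \<le> Pbar_delta \<mu> \<nu> q t s \<delta>' F"
  unfolding Pbar_delta_def centered_packing_def by (rule SUP_subset_mono) auto

lemma Pbar_le_Pbar_delta: "0 < \<delta> \<Longrightarrow> Pbar \<mu> \<nu> q t s E \<le> Pbar_delta \<mu> \<nu> q t s \<delta> E"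
  unfolding Pbar_def by (rule INF_lower) simp

lemma Hbar_delta_antimono:
  "\<delta> \<le> \<delta>' \<Longrightarrow> Hbar_delta \<mu> \<nu> q t s \<delta>' E \<le> Hbar_delta \<mu> \<nu> q t s \<delta> E"
  unfolding Hbar_delta_def centered_covering_def by (rule INF_superset_mono) auto

lemma Hbar_delta_le_Hbar: "0 < \<delta> \<Longrightarrow> Hbar_delta \<mu> \<nu> q t s \<delta> E \<le> Hbar \<mu> \<nu> q t s E"
  unfolding Hbar_def by (rule SUP_upper) simp

lemma Hbar_empty: "Hbar \<mu> \<nu> q t s {} = 0"
proof -
  have "Hbar_delta \<mu> \<nu> q t s \<delta> {} = 0" for \<delta>
    unfolding Hbar_delta_def
    by (rule antisym, rule INF_lower2[of "{}"]) (auto simp: centered_covering_def)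
  then show ?thesis unfolding Hbar_def by simp
qed

lemma centered_covering_UN:
  fixes G :: "nat \<Rightarrow> 'a::metric_space set"
  assumes "\<And>m. centered_covering (G m) \<delta> (P m)"
  shows "centered_covering (\<Union>m. G m) \<delta> (\<Union>m. P m)"
  unfolding centered_covering_def
proof (intro conjI)
  show "countable (\<Union>m. P m)"
    using assms unfolding centered_covering_def by auto
  show "\<forall>(x, r)\<in>\<Union>m. P m. x \<in> (\<Union>m. G m) \<and> 0 < r \<and> r \<le> \<delta>"
    using assms unfolding centered_covering_def by blast
  show "(\<Union>m. G m) \<subseteq> (\<Union>p\<in>\<Union>m. P m. cball (fst p) (snd p))"
    using assms unfolding centered_covering_def by blast
qed

lemma Hbar_delta_countably_subadditive:
  fixes G :: "nat \<Rightarrow> 'a::metric_space set"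
  shows "Hbar_delta \<mu> \<nu> q t s \<delta> (\<Union>m. G m) \<le> (\<Sum>m. Hbar_delta \<mu> \<nu> q t s \<delta> (G m))"
proof (rule ennreal_le_epsilon)
  fix e :: real
  assume fin: "(\<Sum>m. Hbar_delta \<mu> \<nu> q t s \<delta> (G m)) < top" and e: "0 < e"
  let ?H = "\<lambda>m. Hbar_delta \<mu> \<nu> q t s \<delta> (G m)" and ?T = "term_mn \<mu> \<nu> q t s"
  define e' where "e' m = e * (1/2) ^ Suc m" for m
  have "\<forall>m. \<exists>P. centered_covering (G m) \<delta> P \<and> infsum ?T P < ?H m + ennreal (e' m)"
  proof
    fix m
    have "0 < e' m" using e by (simp add: e'_def)
    moreover have "?H m \<noteq> \<infinity>" using ennreal_suminf_lessD[OF fin, of m] by simp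
    ultimately show "\<exists>P. centered_covering (G m) \<delta> P \<and> infsum ?T P < ?H m + ennreal (e' m)"
      using INF_approx_ennreal[OF _ Hbar_delta_def] by blast
  qed
  then obtain P where "\<forall>m. centered_covering (G m) \<delta> (P m) \<and> infsum ?T (P m) < ?H m + ennreal (e' m)"
    using choice[of "\<lambda>m P. centered_covering (G m) \<delta> P \<and> infsum ?T P < ?H m + ennreal (e' m)"] by blast
  then have P: "\<And>m. centered_covering (G m) \<delta> (P m)" "\<And>m. infsum ?T (P m) < ?H m + ennreal (e' m)"
    by simp_all
  have e'_sum: "(\<Sum>m. ennreal (e' m)) = ennreal e"
  proof -
    have "e' sums e" unfolding e'_def using sums_mult[OF power_half_series, of e] by simp
    moreover have "0 \<le> e' m" for m using e by (simp add: e'_def)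
    ultimately show ?thesis by (simp add: sums_iff suminf_ennreal2)
  qed
  have "Hbar_delta \<mu> \<nu> q t s \<delta> (\<Union>m. G m) \<le> infsum ?T (\<Union>m. P m)"
    unfolding Hbar_delta_def by (rule INF_lower) (simp add: centered_covering_UN P(1))
  also have "\<dots> \<le> (\<Sum>m. infsum ?T (P m))" by (rule ennreal_infsum_UN_le)
  also have "\<dots> \<le> (\<Sum>m. ?H m + ennreal (e' m))" by (intro suminf_le less_imp_le P(2)) auto
  also have "\<dots> = (\<Sum>m. ?H m) + ennreal e"
    using e'_sum by (simp add: suminf_add[symmetric])
  finally show "Hbar_delta \<mu> \<nu> q t s \<delta> (\<Union>m. G m) \<le> (\<Sum>m. ?H m) + ennreal e" .
qed

lemma Hbar_countably_subadditive:
  fixes G :: "nat \<Rightarrow> 'a::metric_space set"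
  shows "Hbar \<mu> \<nu> q t s (\<Union>m. G m) \<le> (\<Sum>m. Hbar \<mu> \<nu> q t s (G m))"
  unfolding Hbar_def[of _ _ _ _ _ "\<Union>m. G m"]
proof (rule SUP_least)
  fix \<delta> :: real assume "\<delta> \<in> {0<..}"
  then have "(\<Sum>m. Hbar_delta \<mu> \<nu> q t s \<delta> (G m)) \<le> (\<Sum>m. Hbar \<mu> \<nu> q t s (G m))"
    by (intro suminf_le Hbar_delta_le_Hbar) auto
  then show "Hbar_delta \<mu> \<nu> q t s \<delta> (\<Union>m. G m) \<le> (\<Sum>m. Hbar \<mu> \<nu> q t s (G m))"
    using Hbar_delta_countably_subadditive order_trans by blast
qed

lemma Hmeas_eq_0_if_covered:
  assumes "countable I" "E \<subseteq> (\<Union>i\<in>I. G i)"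
    and "\<And>i F. i \<in> I \<Longrightarrow> F \<subseteq> G i \<Longrightarrow> Hbar \<mu> \<nu> q t s F = 0"
  shows "Hmeas \<mu> \<nu> q t s E = 0"
proof -
  have "Hbar \<mu> \<nu> q t s F = 0" if "F \<subseteq> E" for F
  proof (cases "I = {}")
    case True
    then show ?thesis using that assms(2) Hbar_empty by auto
  next
    case False
    let ?G = "\<lambda>n. G (from_nat_into I n)"
    have "(\<Union>n. ?G n) = (\<Union>i\<in>I. G i)"
      using range_from_nat_into[OF False assms(1)] by (metis image_image)
    then have "F = (\<Union>n. F \<inter> ?G n)"
      using that assms(2) by auto
    then have "Hbar \<mu> \<nu> q t s F \<le> (\<Sum>n. Hbar \<mu> \<nu> q t s (F \<inter> ?G n))"
      by (metis Hbar_countably_subadditive)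
    also have "\<dots> = 0"
    proof -
      have "Hbar \<mu> \<nu> q t s (F \<inter> ?G n) = 0" for n
        using assms(3)[of "from_nat_into I n"] from_nat_into[OF False] by blast
      then show ?thesis by simp
    qed
    finally show ?thesis by simp
  qed
  then show ?thesis unfolding Hmeas_def by (intro antisym SUP_least) auto
qed

lemma term_mn_antimono_s:
  assumes "s' \<le> s" "0 < r" "r \<le> 1/2"
  shows "term_mn \<mu> \<nu> q t s (x, r) \<le> term_mn \<mu> \<nu> q t s' (x, r)"
proof -
  have "(2 * r) powr s \<le> (2 * r) powr s'"
    using assms by (intro powr_mono') auto
  then show ?thesis unfolding term_mn_def by (intro mult_left_mono ennreal_leI) auto
qed

lemma Pbar_delta_antimono_s:
  assumes "s' \<le> s" "\<delta> \<le> 1/2"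
  shows "Pbar_delta \<mu> \<nu> q t s \<delta> E \<le> Pbar_delta \<mu> \<nu> q t s' \<delta> E"
  unfolding Pbar_delta_def
proof (rule SUP_subset_mono[OF subset_refl])
  fix Q assume "Q \<in> {Q. centered_packing E \<delta> Q}"
  then have radius: "0 < snd p" "snd p \<le> 1/2" if "p \<in> Q" for p
    using that assms(2) unfolding centered_packing_def by fastforce+
  show "infsum (term_mn \<mu> \<nu> q t s) Q \<le> infsum (term_mn \<mu> \<nu> q t s') Q"
  proof (intro infsum_mono nonneg_summable_on_complete)
    fix p assume "p \<in> Q"
    then show "term_mn \<mu> \<nu> q t s p \<le> term_mn \<mu> \<nu> q t s' p"
      using term_mn_antimono_s[OF assms(1) radius, of p \<mu> \<nu> q t "fst p"] by simp
  qed auto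
qed

lemma Pbar_antimono_s:
  assumes "s' \<le> s"
  shows "Pbar \<mu> \<nu> q t s E \<le> Pbar \<mu> \<nu> q t s' E"
  unfolding Pbar_def[of _ _ _ _ s']
proof (rule INF_greatest)
  fix \<delta> :: real assume "\<delta> \<in> {0<..}"
  then have "Pbar \<mu> \<nu> q t s E \<le> Pbar_delta \<mu> \<nu> q t s (min \<delta> (1/2)) E"
    by (intro Pbar_le_Pbar_delta) simp
  also have "\<dots> \<le> Pbar_delta \<mu> \<nu> q t s' (min \<delta> (1/2)) E"
    by (rule Pbar_delta_antimono_s[OF assms]) simp
  also have "\<dots> \<le> Pbar_delta \<mu> \<nu> q t s' \<delta> E"
    by (rule Pbar_delta_mono) simp_all
  finally show "Pbar \<mu> \<nu> q t s E \<le> Pbar_delta \<mu> \<nu> q t s' \<delta> E" .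
qed

lemma Pmeas_antimono_s:
  assumes "s' \<le> s"
  shows "Pmeas \<mu> \<nu> q t s E \<le> Pmeas \<mu> \<nu> q t s' E"
  unfolding Pmeas_def
  by (intro INF_mono' suminf_le Pbar_antimono_s[OF assms]) auto

lemma Pmeas_eq_0_if_Bdim_less:
  assumes "Bdim \<mu> \<nu> q t E < ereal s"
  shows "Pmeas \<mu> \<nu> q t s E = 0"
proof -
  obtain s' where "s' < s" "Pmeas \<mu> \<nu> q t s' E = 0"
    using assms unfolding Bdim_def Inf_less_iff by auto
  then show ?thesis
    using Pmeas_antimono_s[of s' s] by (metis le_zero_eq less_imp_le)
qed

section \<open>Comparison of the Hausdorff and packing measures\<close>

lemma infsum_le_Pbar_delta_if_dominated:
  assumes "centered_packing G \<delta> P"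
    and "\<And>p. p \<in> P \<Longrightarrow> term_mn \<mu> \<nu> q t s p \<le> C * term_mn \<mu> \<nu> q' t' s' p"
  shows "infsum (term_mn \<mu> \<nu> q t s) P \<le> C * Pbar_delta \<mu> \<nu> q' t' s' \<delta> G"
proof -
  have "infsum (term_mn \<mu> \<nu> q t s) P \<le> infsum (\<lambda>p. C * term_mn \<mu> \<nu> q' t' s' p) P"
    using assms(2) by (intro infsum_mono nonneg_summable_on_complete) auto
  also have "\<dots> \<le> C * infsum (term_mn \<mu> \<nu> q' t' s') P"
    by (rule ennreal_infsum_cmult_le)
  also have "\<dots> \<le> C * Pbar_delta \<mu> \<nu> q' t' s' \<delta> G"
    unfolding Pbar_delta_def using assms(1) by (intro mult_left_mono SUP_upper) auto
  finally show ?thesis .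
qed

lemma Hbar_delta_le_Pbar_delta_if_dominated:
  fixes \<mu> \<nu> :: "'a::euclidean_space measure" and C :: ennreal
  obtains N :: nat where
    "\<And>G \<delta>. bounded G \<Longrightarrow>
       (\<And>x. x \<in> G \<Longrightarrow> \<exists>r. 0 < r \<and> r \<le> \<delta> \<and>
          term_mn \<mu> \<nu> q t s (x, r) \<le> C * term_mn \<mu> \<nu> q' t' s' (x, r)) \<Longrightarrow>
       Hbar_delta \<mu> \<nu> q t s \<delta> G \<le> of_nat N * C * Pbar_delta \<mu> \<nu> q' t' s' \<delta> G"
proof -
  obtain N :: nat where N: "\<And>(G :: 'a set) \<delta> r. bounded G \<Longrightarrow> (\<And>x. x \<in> G \<Longrightarrow> 0 < r x \<and> r x \<le> \<delta>) \<Longrightarrow>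
       \<exists>P. (\<forall>m. centered_packing G \<delta> (P m) \<and> P m \<subseteq> (\<lambda>x. (x, r x)) ` G) \<and>
           centered_covering G \<delta> (\<Union>m<N. P m)"
    by (rule besicovitch_covering) (rule that, iprover)
  let ?T = "term_mn \<mu> \<nu> q t s" and ?T' = "term_mn \<mu> \<nu> q' t' s'"
  have "Hbar_delta \<mu> \<nu> q t s \<delta> G \<le> of_nat N * C * Pbar_delta \<mu> \<nu> q' t' s' \<delta> G"
    if G: "bounded G" and dom: "\<And>x. x \<in> G \<Longrightarrow> \<exists>r. 0 < r \<and> r \<le> \<delta> \<and> ?T (x, r) \<le> C * ?T' (x, r)"
    for G \<delta>
  proof -
    have "\<forall>x\<in>G. \<exists>r. 0 < r \<and> r \<le> \<delta> \<and> ?T (x, r) \<le> C * ?T' (x, r)"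
      using dom by blast
    then obtain r where r: "\<forall>x\<in>G. 0 < r x \<and> r x \<le> \<delta> \<and> ?T (x, r x) \<le> C * ?T' (x, r x)"
      by (rule bchoice[THEN exE])
    then have "\<And>x. x \<in> G \<Longrightarrow> 0 < r x \<and> r x \<le> \<delta>" by blast
    from N[where \<delta> = \<delta> and r = r, OF G this] obtain P
      where P: "\<forall>m. centered_packing G \<delta> (P m) \<and> P m \<subseteq> (\<lambda>x. (x, r x)) ` G"
        and cover: "centered_covering G \<delta> (\<Union>m<N. P m)"
      by blast
    have "Hbar_delta \<mu> \<nu> q t s \<delta> G \<le> infsum ?T (\<Union>m<N. P m)"
      unfolding Hbar_delta_def using cover by (intro INF_lower) simp
    also have "\<dots> \<le> (\<Sum>m<N. infsum ?T (P m))"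
      by (rule ennreal_infsum_UN_lessThan_le)
    also have "\<dots> \<le> (\<Sum>m<N. C * Pbar_delta \<mu> \<nu> q' t' s' \<delta> G)"
      using P r by (intro sum_mono infsum_le_Pbar_delta_if_dominated) auto
    also have "\<dots> = of_nat N * C * Pbar_delta \<mu> \<nu> q' t' s' \<delta> G"
      by (simp add: mult.assoc)
    finally show ?thesis .
  qed
  then show ?thesis by (rule that)
qed

lemma Hbar_delta_le_Pbar_if_dominated:
  fixes \<mu> \<nu> :: "'a::euclidean_space measure" and C :: ennreal
  assumes "C < top"
  obtains K :: ennreal where "K < top"
    "\<And>G A \<delta>. bounded G \<Longrightarrow> G \<subseteq> A \<Longrightarrow> 0 < \<delta> \<Longrightarrow>
       (\<And>x \<eta>. x \<in> G \<Longrightarrow> 0 < \<eta> \<Longrightarrow> \<exists>r. 0 < r \<and> r \<le> \<eta> \<and>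
          term_mn \<mu> \<nu> q t s (x, r) \<le> C * term_mn \<mu> \<nu> q' t' s' (x, r)) \<Longrightarrow>
       Hbar_delta \<mu> \<nu> q t s \<delta> G \<le> K * Pbar \<mu> \<nu> q' t' s' A"
proof -
  obtain N :: nat where N: "\<And>G \<delta>. bounded G \<Longrightarrow>
       (\<And>x. x \<in> G \<Longrightarrow> \<exists>r. 0 < r \<and> r \<le> \<delta> \<and>
          term_mn \<mu> \<nu> q t s (x, r) \<le> C * term_mn \<mu> \<nu> q' t' s' (x, r)) \<Longrightarrow>
       Hbar_delta \<mu> \<nu> q t s \<delta> G \<le> of_nat N * C * Pbar_delta \<mu> \<nu> q' t' s' \<delta> G"
    by (rule Hbar_delta_le_Pbar_delta_if_dominated) (rule that, iprover)
  define K where "K = of_nat N * C"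
  have K: "K < top" unfolding K_def using assms by (simp add: ennreal_mult_less_top of_nat_less_top)
  have "Hbar_delta \<mu> \<nu> q t s \<delta> G \<le> K * Pbar \<mu> \<nu> q' t' s' A"
    if G: "bounded G" "G \<subseteq> A" "0 < \<delta>"
      and dom: "\<And>x \<eta>. x \<in> G \<Longrightarrow> 0 < \<eta> \<Longrightarrow> \<exists>r. 0 < r \<and> r \<le> \<eta> \<and>
        term_mn \<mu> \<nu> q t s (x, r) \<le> C * term_mn \<mu> \<nu> q' t' s' (x, r)"
    for G A \<delta>
  proof -
    have "Hbar_delta \<mu> \<nu> q t s \<delta> G \<le> K * Pbar_delta \<mu> \<nu> q' t' s' \<delta>' A" if "0 < \<delta>'" for \<delta>'
    proof -
      have "Hbar_delta \<mu> \<nu> q t s \<delta> G \<le> Hbar_delta \<mu> \<nu> q t s (min \<delta> \<delta>') G"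
        by (rule Hbar_delta_antimono) simp
      also have "\<dots> \<le> K * Pbar_delta \<mu> \<nu> q' t' s' (min \<delta> \<delta>') G"
        unfolding K_def
      proof (rule N[OF G(1)])
        fix x assume "x \<in> G"
        then show "\<exists>r. 0 < r \<and> r \<le> min \<delta> \<delta>' \<and>
            term_mn \<mu> \<nu> q t s (x, r) \<le> C * term_mn \<mu> \<nu> q' t' s' (x, r)"
          using dom[of x "min \<delta> \<delta>'"] \<open>0 < \<delta>\<close> \<open>0 < \<delta>'\<close> by simp
      qed
      also have "\<dots> \<le> K * Pbar_delta \<mu> \<nu> q' t' s' \<delta>' A"
        using G(2) by (intro mult_left_mono Pbar_delta_mono) auto
      finally show ?thesis .
    qed
    then have "Hbar_delta \<mu> \<nu> q t s \<delta> G \<le> (INF \<delta>'\<in>{0<..}. K * Pbar_delta \<mu> \<nu> q' t' s' \<delta>' A)"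
      by (intro INF_greatest) auto
    also have "\<dots> = K * Pbar \<mu> \<nu> q' t' s' A"
      unfolding Pbar_def by (simp add: ennreal_mult_INF[OF K])
    finally show ?thesis .
  qed
  with K show ?thesis by (rule that)
qed

lemma Hbar_eq_0_if_dominated:
  fixes \<mu> \<nu> :: "'a::euclidean_space measure" and C :: ennreal
  assumes "bounded S" "G \<subseteq> S" "C < top"
    and dom: "\<And>x \<eta>. x \<in> G \<Longrightarrow> 0 < \<eta> \<Longrightarrow> \<exists>r. 0 < r \<and> r \<le> \<eta> \<and>
      term_mn \<mu> \<nu> q t s (x, r) \<le> C * term_mn \<mu> \<nu> q' t' s' (x, r)"
    and "Pmeas \<mu> \<nu> q' t' s' S = 0"
  shows "Hbar \<mu> \<nu> q t s G = 0"
proof (rule Hbar_delta_le_Pbar_if_dominated[where \<mu> = \<mu> and \<nu> = \<nu> and q = q and t = t and s = s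
      and q' = q' and t' = t' and s' = s', OF assms(3)])
  fix K :: ennreal
  assume K: "K < top" and bound: "\<And>G A \<delta>. bounded G \<Longrightarrow> G \<subseteq> A \<Longrightarrow> 0 < \<delta> \<Longrightarrow>
       (\<And>x \<eta>. x \<in> G \<Longrightarrow> 0 < \<eta> \<Longrightarrow> \<exists>r. 0 < r \<and> r \<le> \<eta> \<and>
          term_mn \<mu> \<nu> q t s (x, r) \<le> C * term_mn \<mu> \<nu> q' t' s' (x, r)) \<Longrightarrow>
       Hbar_delta \<mu> \<nu> q t s \<delta> G \<le> K * Pbar \<mu> \<nu> q' t' s' A"
  have "Hbar_delta \<mu> \<nu> q t s \<delta> G \<le> K * Pmeas \<mu> \<nu> q' t' s' S" if "0 < \<delta>" for \<delta>
  proof -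
    have "Hbar_delta \<mu> \<nu> q t s \<delta> G \<le> K * (\<Sum>i. Pbar \<mu> \<nu> q' t' s' (A i))"
      if "S \<subseteq> (\<Union>i. A i)" for A
    proof -
      have "G = (\<Union>i. G \<inter> A i)" using assms(2) that by blast
      then have "Hbar_delta \<mu> \<nu> q t s \<delta> G \<le> (\<Sum>i. Hbar_delta \<mu> \<nu> q t s \<delta> (G \<inter> A i))"
        by (metis Hbar_delta_countably_subadditive)
      also have "\<dots> \<le> (\<Sum>i. K * Pbar \<mu> \<nu> q' t' s' (A i))"
        using assms(1,2) dom \<open>0 < \<delta>\<close> by (intro suminf_le bound) (auto intro: bounded_subset)
      also have "\<dots> = K * (\<Sum>i. Pbar \<mu> \<nu> q' t' s' (A i))"
        by simp
      finally show ?thesis .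
    qed
    then have "Hbar_delta \<mu> \<nu> q t s \<delta> G
        \<le> (INF A\<in>{A. S \<subseteq> (\<Union>i. A i)}. K * (\<Sum>i. Pbar \<mu> \<nu> q' t' s' (A i)))"
      by (intro INF_greatest) auto
    also have "\<dots> = K * Pmeas \<mu> \<nu> q' t' s' S"
    proof -
      have "(\<lambda>_. S) \<in> {A. S \<subseteq> (\<Union>i::nat. A i)}" by simp
      then have "{A. S \<subseteq> (\<Union>i::nat. A i)} \<noteq> {}" by blast
      then show ?thesis unfolding Pmeas_def by (simp add: ennreal_mult_INF[OF K])
    qed
    finally show ?thesis .
  qed
  then show "Hbar \<mu> \<nu> q t s G = 0"
    using assms(5) unfolding Hbar_def by (intro antisym SUP_least) auto
qed

section \<open>Deviation of local dimensions\<close>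

lemma has_derivative_directional_upper_bound:
  fixes F :: "'a::real_normed_vector \<Rightarrow> real"
  assumes "(F has_derivative D) (at p)" "0 < d"
  shows "\<forall>\<^sub>F k in at_right 0. F (p - k *\<^sub>R v) < F p - k * D v + k * d"
proof -
  have "bounded_linear D" using assms(1) by (rule has_derivative_bounded_linear)
  have "0 < d / (norm v + 1)"
    using assms(2) by (intro divide_pos_pos add_nonneg_pos) auto
  then obtain \<delta> where \<delta>: "0 < \<delta>"
    and approx: "\<And>y. norm (y - p) < \<delta> \<Longrightarrow>
      norm (F y - F p - D (y - p)) \<le> d / (norm v + 1) * norm (y - p)"
    using assms(1) unfolding has_derivative_at_alt by blast
  have "F (p - k *\<^sub>R v) < F p - k * D v + k * d" if k: "0 < k" "k < \<delta> / (norm v + 1)" for k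
  proof -
    have "0 < norm v + 1" by (simp add: add_nonneg_pos)
    then have "k * (norm v + 1) < \<delta>"
      using k(2) by (simp add: pos_less_divide_eq)
    moreover have "k * (norm v + 1) = k * norm v + k" by (simp add: algebra_simps)
    moreover have norm_kv: "norm ((p - k *\<^sub>R v) - p) = k * norm v" using k(1) by simp
    ultimately have "norm ((p - k *\<^sub>R v) - p) < \<delta>"
      using k(1) by linarith
    then have "norm (F (p - k *\<^sub>R v) - F p - D ((p - k *\<^sub>R v) - p))
        \<le> d / (norm v + 1) * norm ((p - k *\<^sub>R v) - p)"
      by (rule approx)
    moreover have "D ((p - k *\<^sub>R v) - p) = - (k * D v)"
      using \<open>bounded_linear D\<close> by (simp add: linear_simps)
    ultimately have "\<bar>F (p - k *\<^sub>R v) - F p + k * D v\<bar> \<le> d / (norm v + 1) * (k * norm v)"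
      unfolding norm_kv by simp
    also have "\<dots> = k * d * (norm v / (norm v + 1))"
      by simp
    also have "\<dots> < k * d * 1"
      using k(1) assms(2) \<open>0 < norm v + 1\<close>
      by (intro mult_strict_left_mono) (auto simp: divide_less_eq)
    finally show ?thesis by linarith
  qed
  moreover have "0 < \<delta> / (norm v + 1)"
    using \<delta> by (intro divide_pos_pos add_nonneg_pos) auto
  ultimately show ?thesis
    unfolding eventually_at_right_field by blast
qed

lemma ereal_step_below_tangent:
  fixes F :: "'a::real_normed_vector \<Rightarrow> ereal"
  assumes "\<forall>\<^sub>F x in nhds p. \<bar>F x\<bar> \<noteq> \<infinity>"
    and "((\<lambda>x. real_of_ereal (F x)) has_derivative D) (at p)" "0 < d"
  obtains k where "0 < k" "F (p - k *\<^sub>R v) < ereal (real_of_ereal (F p) - k * D v + k * d)"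
proof -
  have "((\<lambda>k. p - k *\<^sub>R v) \<longlongrightarrow> p) (at_right 0)"
    by (auto intro!: tendsto_eq_intros)
  with assms(1) have "\<forall>\<^sub>F k in at_right 0. \<bar>F (p - k *\<^sub>R v)\<bar> \<noteq> \<infinity>"
    by (rule eventually_compose_filterlim)
  moreover have "\<forall>\<^sub>F k in at_right 0.
      real_of_ereal (F (p - k *\<^sub>R v)) < real_of_ereal (F p) - k * D v + k * d"
    by (rule has_derivative_directional_upper_bound[OF assms(2,3)])
  ultimately have "\<forall>\<^sub>F k in at_right 0.
      0 < k \<and> F (p - k *\<^sub>R v) < ereal (real_of_ereal (F p) - k * D v + k * d)"
    using eventually_at_right_less
  proof eventually_elim
    case (elim k)
    then show ?case by (cases "F (p - k *\<^sub>R v)") auto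
  qed
  then have "\<exists>k. 0 < k \<and> F (p - k *\<^sub>R v) < ereal (real_of_ereal (F p) - k * D v + k * d)"
    by (rule eventually_happens'[rotated]) simp
  then show ?thesis using that by blast
qed

lemma measure_cball_pos_if_msupp:
  assumes "finite_measure \<mu>" "sets \<mu> = sets borel" "x \<in> msupp \<mu>" "0 < r"
  shows "0 < measure \<mu> (cball x r)"
proof -
  have "0 < emeasure \<mu> (ball x r)" using assms(3,4) unfolding msupp_def by auto
  also have "\<dots> \<le> emeasure \<mu> (cball x r)"
    using assms(2) by (intro emeasure_mono) auto
  finally show ?thesis
    using finite_measure.emeasure_eq_measure[OF assms(1)] by simp
qed

lemma powr_shift_le:
  fixes m n r k a v1 v2 q t s :: real
  assumes "0 < m" "0 < n" "0 < r" "0 \<le> k" "v1 * ln m + v2 * ln n \<le> a * ln r"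
  shows "m powr q * n powr t * (2 * r) powr s
    \<le> 2 powr (- (k * a)) * (m powr (q - k * v1) * n powr (t - k * v2) * (2 * r) powr (s + k * a))"
proof -
  have "k * (v1 * ln m + v2 * ln n) \<le> k * (a * ln r)"
    using assms(5,4) by (rule mult_left_mono)
  then have "q * ln m + t * ln n + s * ln (2 * r)
      \<le> - (k * a) * ln 2 + ((q - k * v1) * ln m + (t - k * v2) * ln n + (s + k * a) * ln (2 * r))"
    using assms(3) by (simp add: ln_mult algebra_simps)
  then show ?thesis
    using assms(1-3) by (simp add: powr_def exp_add[symmetric])
qed

lemma term_mn_le_shifted:
  assumes "0 < measure \<mu> (cball x r)" "0 < measure \<nu> (cball x r)" "0 < r" "0 \<le> k"
    and "v1 * ln (measure \<mu> (cball x r)) + v2 * ln (measure \<nu> (cball x r)) \<le> a * ln r"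
  shows "term_mn \<mu> \<nu> q t s (x, r)
    \<le> ennreal (2 powr (- (k * a))) * term_mn \<mu> \<nu> (q - k * v1) (t - k * v2) (s + k * a) (x, r)"
  using powr_shift_le[OF assms, of q t s] assms(1-3)
  by (simp add: term_mn_def cpow_def ennreal_leI flip: ennreal_mult)

definition deviating_points ::
    "'a::metric_space measure \<Rightarrow> 'a measure \<Rightarrow> real \<Rightarrow> real \<Rightarrow> real \<times> real \<Rightarrow> real \<Rightarrow> 'a set" where
  "deviating_points \<mu> \<nu> \<alpha> \<beta> v d = {x \<in> msupp \<mu> \<inter> msupp \<nu>. \<exists>\<^sub>F r in at_right 0.
     d < fst v * (ln (measure \<mu> (cball x r)) / ln r - \<alpha>) + snd v * (ln (measure \<nu> (cball x r)) / ln r - \<beta>)}"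

lemma deviating_points_dominated:
  assumes "finite_measure \<mu>" "sets \<mu> = sets borel" "finite_measure \<nu>" "sets \<nu> = sets borel"
    and "x \<in> deviating_points \<mu> \<nu> \<alpha> \<beta> v d" "0 < \<eta>" "0 \<le> k"
  defines "a \<equiv> d + fst v * \<alpha> + snd v * \<beta>"
  shows "\<exists>r. 0 < r \<and> r \<le> \<eta> \<and> term_mn \<mu> \<nu> q t s (x, r)
    \<le> ennreal (2 powr (- (k * a))) * term_mn \<mu> \<nu> (q - k * fst v) (t - k * snd v) (s + k * a) (x, r)"
proof -
  let ?m = "\<lambda>r. measure \<mu> (cball x r)" and ?n = "\<lambda>r. measure \<nu> (cball x r)"
  have x: "x \<in> msupp \<mu>" "x \<in> msupp \<nu>"
    and freq: "\<exists>\<^sub>F r in at_right 0. d < fst v * (ln (?m r) / ln r - \<alpha>) + snd v * (ln (?n r) / ln r - \<beta>)"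
    using assms(5) unfolding deviating_points_def by auto
  have "\<forall>\<^sub>F r in at_right 0. r \<in> {0<..<min \<eta> 1}"
    using assms(6) by (intro eventually_at_right_real) simp
  from frequently_ex[OF frequently_eventually_conj[OF freq this]]
  obtain r where r: "0 < r" "r < min \<eta> 1"
    and dev: "d < fst v * (ln (?m r) / ln r - \<alpha>) + snd v * (ln (?n r) / ln r - \<beta>)"
    by auto
  have ln_r: "ln r < 0" using r by simp
  have pos: "0 < ?m r" "0 < ?n r"
    using measure_cball_pos_if_msupp assms(1-4) x r(1) by blast+
  have "(fst v * (ln (?m r) / ln r - \<alpha>) + snd v * (ln (?n r) / ln r - \<beta>)) * ln r
      = fst v * ln (?m r) + snd v * ln (?n r) - (fst v * \<alpha> + snd v * \<beta>) * ln r"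
    using ln_r by (simp add: field_simps)
  moreover have "(fst v * (ln (?m r) / ln r - \<alpha>) + snd v * (ln (?n r) / ln r - \<beta>)) * ln r < d * ln r"
    using dev ln_r by (rule mult_strict_right_mono_neg)
  ultimately have "fst v * ln (?m r) + snd v * ln (?n r) \<le> a * ln r"
    unfolding a_def by (simp add: algebra_simps)
  then show ?thesis
    using term_mn_le_shifted[OF pos r(1) assms(7)] r by (intro exI[of _ r]) auto
qed

lemma bounded_linear_real_pair:
  fixes D :: "real \<times> real \<Rightarrow> real"
  assumes "bounded_linear D"
  shows "D v = fst v * D (1, 0) + snd v * D (0, 1)"
proof -
  have "D v = D (fst v *\<^sub>R (1, 0) + snd v *\<^sub>R (0, 1))" by (cases v) simp
  also have "\<dots> = fst v * D (1, 0) + snd v * D (0, 1)"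
    by (simp only: linear_simps[OF assms]) simp
  finally show ?thesis .
qed

lemma Hbar_deviating_points_eq_0:
  fixes \<mu> \<nu> :: "'a::euclidean_space measure" and D :: "real \<times> real \<Rightarrow> real"
  assumes "finite_measure \<mu>" "sets \<mu> = sets borel" "finite_measure \<nu>" "sets \<nu> = sets borel"
    and "bounded (msupp \<mu> \<inter> msupp \<nu>)"
    and fin: "eventually (\<lambda>p. \<bar>Bmunu \<mu> \<nu> (fst p) (snd p)\<bar> \<noteq> \<infinity>) (nhds (q, t))"
    and der: "((\<lambda>p. real_of_ereal (Bmunu \<mu> \<nu> (fst p) (snd p))) has_derivative D) (at (q, t))"
    and "0 < d" "G \<subseteq> deviating_points \<mu> \<nu> (- D (1, 0)) (- D (0, 1)) v d"
  shows "Hbar \<mu> \<nu> q t (real_of_ereal (Bmunu \<mu> \<nu> q t)) G = 0"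
proof -
  let ?S = "msupp \<mu> \<inter> msupp \<nu>"
  define a where "a = d + fst v * - D (1, 0) + snd v * - D (0, 1)"
  have "D v = fst v * D (1, 0) + snd v * D (0, 1)"
    using has_derivative_bounded_linear[OF der] by (rule bounded_linear_real_pair)
  then obtain k where k: "0 < k"
    "Bmunu \<mu> \<nu> (q - k * fst v) (t - k * snd v) < ereal (real_of_ereal (Bmunu \<mu> \<nu> q t) + k * a)"
    using ereal_step_below_tangent[of "\<lambda>p. Bmunu \<mu> \<nu> (fst p) (snd p)", OF fin der \<open>0 < d\<close>, of v]
    unfolding a_def by (auto simp: algebra_simps)
  let ?s' = "real_of_ereal (Bmunu \<mu> \<nu> q t) + k * a"
  from k(2) have null: "Pmeas \<mu> \<nu> (q - k * fst v) (t - k * snd v) ?s' ?S = 0"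
    unfolding Bmunu_def by (rule Pmeas_eq_0_if_Bdim_less)
  show ?thesis
  proof (rule Hbar_eq_0_if_dominated[OF assms(5) _ _ _ null])
    show "G \<subseteq> ?S" using assms(9) unfolding deviating_points_def by blast
    show "ennreal (2 powr (- (k * a))) < top" by simp
    show "\<exists>r. 0 < r \<and> r \<le> \<eta> \<and> term_mn \<mu> \<nu> q t (real_of_ereal (Bmunu \<mu> \<nu> q t)) (x, r)
        \<le> ennreal (2 powr (- (k * a))) * term_mn \<mu> \<nu> (q - k * fst v) (t - k * snd v) ?s' (x, r)"
      if "x \<in> G" "0 < \<eta>" for x \<eta>
      using deviating_points_dominated[OF assms(1-4) _ \<open>0 < \<eta>\<close>, of x "- D (1, 0)" "- D (0, 1)" v d k]
        that assms(9) k(1) unfolding a_def by auto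
  qed
qed

lemma not_tendsto_frequently_deviation:
  fixes f :: "'a \<Rightarrow> real"
  assumes "\<not> (f \<longlongrightarrow> a) F"
  shows "\<exists>m::nat. \<exists>\<sigma>\<in>{1, -1::real}. \<exists>\<^sub>F x in F. 1 / Suc m < \<sigma> * (f x - a)"
proof -
  obtain e where e: "0 < e" "\<not> (\<forall>\<^sub>F x in F. dist (f x) a < e)"
    using assms unfolding tendsto_iff by blast
  obtain m :: nat where m: "1 / Suc m < e"
    using reals_Archimedean[OF e(1)] by (auto simp: inverse_eq_divide)
  have "\<exists>\<^sub>F x in F. 1 / Suc m < f x - a \<or> 1 / Suc m < - (f x - a)"
    using e(2) unfolding not_eventually
    by (rule frequently_elim1) (use m in \<open>auto simp: dist_real_def\<close>)
  then show ?thesis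
    unfolding frequently_disj_iff by auto
qed

lemma msupp_diff_Eset_subset_deviating_points:
  "msupp \<mu> \<inter> msupp \<nu> - Eset \<mu> \<nu> \<alpha> \<beta> \<subseteq>
    (\<Union>(v, m)\<in>{(1, 0), (-1, 0), (0, 1), (0, -1)} \<times> UNIV. deviating_points \<mu> \<nu> \<alpha> \<beta> v (1 / Suc m))"
proof
  fix x assume x: "x \<in> msupp \<mu> \<inter> msupp \<nu> - Eset \<mu> \<nu> \<alpha> \<beta>"
  then have "\<not> ((\<lambda>r. ln (measure \<mu> (cball x r)) / ln r) \<longlongrightarrow> \<alpha>) (at_right 0) \<or>
      \<not> ((\<lambda>r. ln (measure \<nu> (cball x r)) / ln r) \<longlongrightarrow> \<beta>) (at_right 0)"
    unfolding Eset_def by auto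
  then show "x \<in> (\<Union>(v, m)\<in>{(1, 0), (-1, 0), (0, 1), (0, -1)} \<times> UNIV. deviating_points \<mu> \<nu> \<alpha> \<beta> v (1 / Suc m))"
  proof
    assume "\<not> ((\<lambda>r. ln (measure \<mu> (cball x r)) / ln r) \<longlongrightarrow> \<alpha>) (at_right 0)"
    then obtain m :: nat and \<sigma> :: real where "\<sigma> \<in> {1, -1}"
      "\<exists>\<^sub>F r in at_right 0. 1 / Suc m < \<sigma> * (ln (measure \<mu> (cball x r)) / ln r - \<alpha>)"
      using not_tendsto_frequently_deviation by blast
    then show ?thesis
      using x unfolding deviating_points_def by (auto intro!: bexI[of _ "((\<sigma>, 0), m)"])
  next
    assume "\<not> ((\<lambda>r. ln (measure \<nu> (cball x r)) / ln r) \<longlongrightarrow> \<beta>) (at_right 0)"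
    then obtain m :: nat and \<sigma> :: real where "\<sigma> \<in> {1, -1}"
      "\<exists>\<^sub>F r in at_right 0. 1 / Suc m < \<sigma> * (ln (measure \<nu> (cball x r)) / ln r - \<beta>)"
      using not_tendsto_frequently_deviation by blast
    then show ?thesis
      using x unfolding deviating_points_def by (auto intro!: bexI[of _ "((0, \<sigma>), m)"])
  qed
qed

theorem mainTheorem8:
  fixes \<mu> \<nu> :: "'a::euclidean_space measure" and q t :: real
    and D :: "real \<times> real \<Rightarrow> real"
  assumes "sets \<mu> = sets borel" "prob_space \<mu>" "compact (msupp \<mu>)"
      and "sets \<nu> = sets borel" "prob_space \<nu>" "compact (msupp \<nu>)"
      and "eventually (\<lambda>p. \<bar>Bmunu \<mu> \<nu> (fst p) (snd p)\<bar> \<noteq> \<infinity>) (nhds (q, t))"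
      and "((\<lambda>p. real_of_ereal (Bmunu \<mu> \<nu> (fst p) (snd p))) has_derivative D) (at (q, t))"
  shows "Hmeas \<mu> \<nu> q t (real_of_ereal (Bmunu \<mu> \<nu> q t))
           ((msupp \<mu> \<inter> msupp \<nu>) - Eset \<mu> \<nu> (- D (1, 0)) (- D (0, 1))) = 0"
proof (rule Hmeas_eq_0_if_covered[OF _ msupp_diff_Eset_subset_deviating_points])
  show "countable ({(1, 0), (-1, 0), (0, 1), (0, -1)} \<times> (UNIV :: nat set) :: ((real \<times> real) \<times> nat) set)"
    by simp
  have "bounded (msupp \<mu> \<inter> msupp \<nu>)"
    using assms(3,6) by (intro compact_imp_bounded compact_Int)
  then show "Hbar \<mu> \<nu> q t (real_of_ereal (Bmunu \<mu> \<nu> q t)) F = 0"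
    if "i \<in> {(1, 0), (-1, 0), (0, 1), (0, -1)} \<times> UNIV"
      and "F \<subseteq> (case i of (v, m) \<Rightarrow> deviating_points \<mu> \<nu> (- D (1, 0)) (- D (0, 1)) v (1 / Suc m))"
    for i F
    using that assms(1,2,4,5,7,8) prob_space.finite_measure
    by (intro Hbar_deviating_points_eq_0[of \<mu> \<nu> q t D "1 / Suc (snd i)" F "fst i"])
      (auto split: prod.splits)
qed

end
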